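(* Let $n$ be a positive integer and let $\mathbb{F}$ be a field with $\operatorname{char}(\mathbb{F})\neq 2$ and $|\mathbb{F}|\geq n^2+1$. Let $\Sigma_n$ denote the set of all $n\times n$ symmetric matrices over $\mathbb{F}$. Let $\psi:\Sigma_n\to\Sigma_n$ be a map, and let $\chi$ be a map from the set of all invertible matrices in $\Sigma_n$ into $\Sigma_n$. If $\operatorname{tr}(xy)=\operatorname{tr}(\chi(x)\psi(y))$ for every invertible $x\in\Sigma_n$ and every $y\in\Sigma_n$, then $\psi$ is linear. *)

theory Defs
  imports "HOL-Analysis.Analysis"
begin

definition symmetric_mat :: "'a::field^'n^'n \<Rightarrow> bool" where
  "symmetric_mat A \<longleftrightarrow> transpose A = A"

definition mat_scale :: "'a::field \<Rightarrow> 'a^'n^'n \<Rightarrow> 'a^'n^'n" where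
  "mat_scale c A = (\<chi> i j. c * A $ i $ j)"

end

theory Submission
  imports Defs
begin

(* Extend psi to all matrices by psi' y = psi (sym y) + skew y, and send s + a (s invertible
   symmetric, a skew) to chi s + a. Symmetric and skew matrices are trace-orthogonal, so
   tr ((s + a) y) = tr ((chi s + a) (psi' y)) holds for every matrix y. When char F <> 2 there
   are n^2 matrices s_p + a_p forming a basis of all matrices (transposition matrices plus
   E_ij - E_ji, and diagonal matrices I + E_ii). Pairing against the dual basis shows that the
   chi s_p + a_p form a basis as well, so a symmetric z with tr (chi w z) = 0 for all invertible
   symmetric w is zero. By the trace identity this applies to psi (x + y) - psi x - psi y and
   to psi (c x) - c psi x. *)

lemma symmetric_mat_iff: "symmetric_mat A \<longleftrightarrow> (\<forall>i j. A $ i $ j = A $ j $ i)"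
  by (auto simp: symmetric_mat_def transpose_def vec_eq_iff)

lemma symmetric_mat_add: "symmetric_mat A \<Longrightarrow> symmetric_mat B \<Longrightarrow> symmetric_mat (A + B)"
  by (simp add: symmetric_mat_iff)

lemma symmetric_mat_diff: "symmetric_mat A \<Longrightarrow> symmetric_mat B \<Longrightarrow> symmetric_mat (A - B)"
  by (simp add: symmetric_mat_iff)

lemma symmetric_mat_mat_scale: "symmetric_mat A \<Longrightarrow> symmetric_mat (mat_scale c A)"
  by (simp add: symmetric_mat_iff mat_scale_def)

lemma trace_transpose: "trace (transpose A) = trace A"
  by (simp add: trace_def transpose_def)

lemma trace_mult_mat_scale: "trace (x ** mat_scale c y) = c * trace (x ** y)"
  by (simp add: trace_def matrix_matrix_mult_def mat_scale_def sum_distrib_left mult.left_commute)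

lemma trace_mult_add_left: "trace ((A + B) ** C) = trace (A ** C) + trace (B ** C)"
  by (simp add: trace_def matrix_matrix_mult_def sum.distrib distrib_right)

lemma trace_mult_add_right:
  "trace (A ** (B + C)) = trace (A ** B) + trace (A ** (C :: 'a::comm_semiring_1^'n^'n))"
  by (simp add: matrix_add_ldistrib trace_add)

lemma trace_mult_diff_right:
  "trace (A ** (B - C)) = trace (A ** B) - trace (A ** (C :: 'a::comm_ring_1^'n^'n))"
  by (simp add: trace_def matrix_matrix_mult_def sum_subtractf right_diff_distrib)

lemma trace_mult_uminus: "trace (x ** - y) = - trace (x ** (y :: 'a::comm_ring_1^'n^'n))"
  by (simp add: trace_def matrix_matrix_mult_def sum_negf)

lemma trace_symmetric_mult_skew:
  fixes S A :: "'a::field^'n^'n"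
  assumes two: "(2::'a) \<noteq> 0" and S: "symmetric_mat S" and A: "transpose A = - A"
  shows "trace (S ** A) = 0"
proof -
  have "trace (S ** A) = trace (transpose A ** S)"
    using S by (metis trace_transpose matrix_transpose_mul symmetric_mat_def)
  also have "\<dots> = - trace (S ** A)"
    unfolding A trace_mul_sym[of "- A"] by (rule trace_mult_uminus)
  finally have "2 * trace (S ** A) = 0"
    by (simp add: algebra_simps)
  then show ?thesis
    using two by simp
qed

definition sym_part :: "'a::field^'n^'n \<Rightarrow> 'a^'n^'n" where
  "sym_part y = mat_scale (inverse 2) (y + transpose y)"

definition skew_part :: "'a::field^'n^'n \<Rightarrow> 'a^'n^'n" where
  "skew_part y = mat_scale (inverse 2) (y - transpose y)"

lemma symmetric_sym_part: "symmetric_mat (sym_part y)"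
  by (simp add: symmetric_mat_iff sym_part_def mat_scale_def transpose_def add.commute)

lemma transpose_skew_part: "transpose (skew_part y) = - skew_part y"
  by (simp add: skew_part_def mat_scale_def transpose_def vec_eq_iff algebra_simps)

lemma sym_part_add_skew_part:
  assumes "(2::'a::field) \<noteq> 0"
  shows "sym_part y + skew_part y = (y :: 'a^'n^'n)"
proof -
  have "inverse 2 * (u + v) + inverse 2 * (u - v) = (u::'a)" for u v
    using assms by (simp add: field_simps)
  then show ?thesis
    by (simp add: sym_part_def skew_part_def mat_scale_def vec_eq_iff)
qed

(* Vectorisation, so that spans and inverses in 'a^'m apply to spaces of matrices. *)
definition flat :: "'a^'n^'n \<Rightarrow> 'a^('n \<times> 'n)" where
  "flat A = (\<chi> p. A $ fst p $ snd p)"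

lemma flat_component [simp]: "flat A $ (i, j) = A $ i $ j"
  by (simp add: flat_def)

lemma trace_mult_eq_sum_flat:
  "trace (x ** y) = (\<Sum>p\<in>UNIV. flat x $ p * flat (transpose y) $ p)"
proof -
  have "trace (x ** y) = (\<Sum>i\<in>UNIV. \<Sum>j\<in>UNIV. x $ i $ j * y $ j $ i)"
    by (simp add: trace_def matrix_matrix_mult_def)
  also have "\<dots> = (\<Sum>(i, j)\<in>UNIV \<times> UNIV. x $ i $ j * y $ j $ i)"
    by (rule sum.cartesian_product)
  also have "\<dots> = (\<Sum>p\<in>UNIV. flat x $ p * flat (transpose y) $ p)"
    by (rule sum.cong) (auto simp: transpose_def)
  finally show ?thesis .
qed

lemma eq_0_if_trace_orthogonal_to_dual_family:
  fixes x c :: "'n \<times> 'n \<Rightarrow> 'a::field^'n^'n" and g :: "'a^'n^'n \<Rightarrow> 'a^'n^'n"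
  assumes span: "vec.span (range (\<lambda>p. flat (x p))) = UNIV"
    and dual: "\<And>p y. trace (x p ** y) = trace (c p ** g y)"
    and orth: "\<And>p. trace (c p ** z) = 0"
  shows "z = 0"
proof -
  (* If B inverts the matrix X with rows flat (x p), the y l read off from the columns of B
     are dual to the x p; by dual, P ** Q below is then X ** B = mat 1. *)
  define X where "X = (\<chi> p. flat (x p))"
  have "rows X = range (\<lambda>p. flat (x p))"
    by (auto simp: X_def rows_def row_def)
  then obtain B where "B ** X = mat 1"
    using span matrix_left_invertible_span_rows_gen by metis
  then have XB: "X ** B = mat 1"
    using matrix_left_right_inverse by blast
  define y where "y l = (\<chi> i j. B $ (j, i) $ l)" for l
  define P where "P = (\<chi> p. flat (c p))"
  define Q where "Q = (\<chi> q l. flat (transpose (g (y l))) $ q)"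
  have "(P ** Q) $ p $ l = (X ** B) $ p $ l" for p l
  proof -
    have "(P ** Q) $ p $ l = trace (c p ** g (y l))"
      unfolding trace_mult_eq_sum_flat by (simp add: matrix_matrix_mult_def P_def Q_def)
    also have "\<dots> = trace (x p ** y l)"
      by (rule dual [symmetric])
    also have "\<dots> = (X ** B) $ p $ l"
      unfolding trace_mult_eq_sum_flat
      by (simp add: matrix_matrix_mult_def X_def y_def flat_def transpose_def)
    finally show ?thesis .
  qed
  with XB have "Q ** P = mat 1"
    using matrix_left_right_inverse by (metis vec_eq_iff)
  moreover have "P *v flat (transpose z) = 0"
    by (simp add: vec_eq_iff matrix_vector_mult_def P_def orth flip: trace_mult_eq_sum_flat)
  ultimately have "flat (transpose z) = 0"
    by (metis matrix_vector_mul_assoc matrix_vector_mul_lid matrix_vector_mult_0_right)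
  then show ?thesis
    by (simp add: vec_eq_iff flat_def transpose_def)
qed

definition mat_unit :: "'n \<Rightarrow> 'n \<Rightarrow> 'a::zero_neq_one^'n^'n" where
  "mat_unit i j = (\<chi> a b. if a = i \<and> b = j then 1 else 0)"

definition swap_mat :: "'n \<Rightarrow> 'n \<Rightarrow> 'a::zero_neq_one^'n^'n" where
  "swap_mat i j = (\<chi> a. mat 1 $ Transposition.transpose i j a)"

lemma symmetric_swap_mat: "symmetric_mat (swap_mat i j)"
  by (auto simp: symmetric_mat_iff swap_mat_def mat_def Transposition.transpose_def)

lemma invertible_swap_mat: "invertible (swap_mat i j :: 'a::field^'n^'n)"
  by (simp add: invertible_det_nz swap_mat_def det_permute_rows permutes_swap_id sign_swap_id)

lemma symmetric_mat_one_add_mat_unit: "symmetric_mat (mat 1 + mat_unit i i)"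
  by (auto simp: symmetric_mat_iff mat_def mat_unit_def)

lemma invertible_mat_one_add_mat_unit:
  assumes "(2::'a::field) \<noteq> 0"
  shows "invertible (mat 1 + mat_unit i i :: 'a^'n^'n)"
proof -
  let ?M = "mat 1 + mat_unit i i :: 'a^'n^'n"
  have "det ?M = (\<Prod>k\<in>UNIV. ?M $ k $ k)"
    by (rule det_diagonal) (auto simp: mat_def mat_unit_def)
  also have "\<dots> = (\<Prod>k\<in>UNIV. if k = i then 2 else 1)"
    by (rule prod.cong) (auto simp: mat_def mat_unit_def)
  finally show ?thesis
    using assms by (simp add: invertible_det_nz)
qed

(* Using mat 1 rather than mat 1 + mat_unit i0 i0 at one diagonal index puts mat 1 into the
   span in every characteristic. *)
definition sym_generator :: "'n \<Rightarrow> 'n \<times> 'n \<Rightarrow> 'a::field^'n^'n" where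
  "sym_generator i0 p =
    (if fst p \<noteq> snd p then swap_mat (fst p) (snd p)
     else if fst p = i0 then mat 1 else mat 1 + mat_unit (fst p) (fst p))"

definition skew_generator :: "'n \<times> 'n \<Rightarrow> 'a::field^'n^'n" where
  "skew_generator p =
    (if fst p = snd p then 0 else mat_unit (fst p) (snd p) - mat_unit (snd p) (fst p))"

lemma symmetric_sym_generator: "symmetric_mat (sym_generator i0 p)"
  using symmetric_swap_mat symmetric_mat_one_add_mat_unit
  by (auto simp: sym_generator_def symmetric_mat_def)

lemma invertible_sym_generator:
  "(2::'a::field) \<noteq> 0 \<Longrightarrow> invertible (sym_generator i0 p :: 'a^'n^'n)"
  using invertible_swap_mat invertible_mat_one_add_mat_unit invertible_det_nz[of "mat 1"]
  by (auto simp: sym_generator_def)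

lemma transpose_skew_generator: "transpose (skew_generator p) = - skew_generator p"
  by (auto simp: skew_generator_def mat_unit_def transpose_def vec_eq_iff)

lemma flat_mat_one: "flat (mat 1 :: 'a::semiring_1^'n^'n) = (\<Sum>i\<in>UNIV. axis (i, i) 1)"
  by (auto simp: vec_eq_iff sum_component axis_def mat_def split_paired_All intro!: sum.neutral)

lemma span_flat_generators:
  assumes two: "(2::'a::field) \<noteq> 0"
  shows "vec.span (range (\<lambda>p. flat (sym_generator i0 p + skew_generator p :: 'a^'n^'n))) = UNIV"
    (is "?V = UNIV")
proof -
  let ?x = "\<lambda>p. sym_generator i0 p + skew_generator p :: 'a^'n^'n"
  have gen: "flat (?x p) \<in> ?V" for p
    by (rule vec.span_base) simp
  have one: "flat (mat 1 :: 'a^'n^'n) \<in> ?V"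
    using gen[of "(i0, i0)"] by (simp add: sym_generator_def skew_generator_def)
  have diag: "axis (i, i) 1 \<in> ?V" if "i \<noteq> i0" for i
  proof -
    have "axis (i, i) 1 = flat (?x (i, i)) - flat (mat 1 :: 'a^'n^'n)"
      using that by (auto simp: vec_eq_iff split_paired_All axis_def mat_def mat_unit_def
          sym_generator_def skew_generator_def)
    then show ?thesis
      using gen one by (simp add: vec.span_diff)
  qed
  have diag0: "axis (i0, i0) 1 \<in> ?V"
  proof -
    have "axis (i0, i0) 1 = flat (mat 1 :: 'a^'n^'n) - (\<Sum>i\<in>UNIV - {i0}. axis (i, i) 1)"
      by (simp add: flat_mat_one sum.remove[of UNIV i0])
    then show ?thesis
      using one diag by (auto intro!: vec.span_diff vec.span_sum)
  qed
  have diag_all: "axis (i, i) 1 \<in> ?V" for i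
    using diag diag0 by (cases "i = i0") auto
  have off_diag: "axis (i, j) 1 \<in> ?V" if "i \<noteq> j" for i j
  proof -
    let ?r = "flat (?x (i, j)) - flat (mat 1 :: 'a^'n^'n) + axis (i, i) 1 + axis (j, j) 1"
    have "2 *s axis (i, j) 1 = ?r"
      using that by (auto simp: vec_eq_iff split_paired_All axis_def mat_def mat_unit_def
          swap_mat_def sym_generator_def skew_generator_def Transposition.transpose_def)
    then have eq: "axis (i, j) 1 = inverse 2 *s ?r"
      using two by (metis vector_smult_assoc left_inverse vector_smult_lid)
    have "?r \<in> ?V"
      by (intro vec.span_add vec.span_diff gen one diag_all)
    then show ?thesis
      unfolding eq by (rule vec.span_scale)
  qed
  have "axis p 1 \<in> ?V" for p
    using diag_all off_diag by (cases p) metis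
  then have "cart_basis \<subseteq> ?V"
    by (auto simp: cart_basis_def)
  then show ?thesis
    using vec.span_minimal[of cart_basis ?V] by auto
qed

lemma invertible_symmetric_plus_skew_basis:
  assumes "(2::'a) \<noteq> 0"
  obtains s a :: "'n \<times> 'n \<Rightarrow> 'a::field^'n^'n"
  where "\<And>p. symmetric_mat (s p)" "\<And>p. invertible (s p)" "\<And>p. transpose (a p) = - a p"
    and "vec.span (range (\<lambda>p. flat (s p + a p))) = UNIV"
  using symmetric_sym_generator invertible_sym_generator[OF assms] transpose_skew_generator
    span_flat_generators[OF assms]
  by (rule that)

locale trace_compatible_maps =
  fixes psi chi :: "'a::field^'n^'n \<Rightarrow> 'a^'n^'n"
  assumes two: "(2::'a) \<noteq> 0"
    and psi_maps: "\<And>y. symmetric_mat y \<Longrightarrow> symmetric_mat (psi y)"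
    and chi_maps: "\<And>x. symmetric_mat x \<Longrightarrow> invertible x \<Longrightarrow> symmetric_mat (chi x)"
    and trace_eq: "\<And>x y. symmetric_mat x \<Longrightarrow> invertible x \<Longrightarrow> symmetric_mat y \<Longrightarrow>
      trace (x ** y) = trace (chi x ** psi y)"
begin

definition psi_ext :: "'a^'n^'n \<Rightarrow> 'a^'n^'n" where
  "psi_ext y = psi (sym_part y) + skew_part y"

lemma trace_eq_ext:
  assumes s: "symmetric_mat s" "invertible s" and a: "transpose a = - a"
  shows "trace ((s + a) ** y) = trace ((chi s + a) ** psi_ext y)"
proof -
  let ?h = "sym_part y" and ?k = "skew_part y"
  have orth: "trace (S ** A) = 0" "trace (A ** S) = 0"
    if "symmetric_mat S" "transpose A = - A" for S A :: "'a^'n^'n"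
    using trace_symmetric_mult_skew[OF two that] trace_mul_sym[of A S] by simp_all
  have "trace ((s + a) ** y) = trace ((s + a) ** (?h + ?k))"
    by (simp add: sym_part_add_skew_part two)
  also have "\<dots> = trace (s ** ?h) + trace (a ** ?k)"
    using orth[OF s(1) transpose_skew_part] orth[OF symmetric_sym_part a]
    by (simp add: trace_mult_add_left trace_mult_add_right)
  also have "\<dots> = trace (chi s ** psi ?h) + trace (a ** ?k)"
    using trace_eq[OF s symmetric_sym_part] by simp
  also have "\<dots> = trace ((chi s + a) ** psi_ext y)"
    using orth[OF chi_maps[OF s] transpose_skew_part] orth[OF psi_maps[OF symmetric_sym_part] a]
    by (simp add: psi_ext_def trace_mult_add_left trace_mult_add_right)
  finally show ?thesis .
qed

lemma eq_if_trace_chi_eq: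
  assumes u: "symmetric_mat u" and v: "symmetric_mat v"
    and eq: "\<And>w. symmetric_mat w \<Longrightarrow> invertible w \<Longrightarrow> trace (chi w ** u) = trace (chi w ** v)"
  shows "u = v"
proof -
  obtain s a :: "'n \<times> 'n \<Rightarrow> 'a^'n^'n"
    where s: "\<And>p. symmetric_mat (s p)" "\<And>p. invertible (s p)"
      and a: "\<And>p. transpose (a p) = - a p"
      and span: "vec.span (range (\<lambda>p. flat (s p + a p))) = UNIV"
    using invertible_symmetric_plus_skew_basis[OF two] by blast
  have "u - v = 0"
  proof (rule eq_0_if_trace_orthogonal_to_dual_family[OF span])
    show "trace ((s p + a p) ** y) = trace ((chi (s p) + a p) ** psi_ext y)" for p y
      using trace_eq_ext[OF s a] .
    have "trace (a p ** (u - v)) = 0" for p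
      using trace_symmetric_mult_skew[OF two symmetric_mat_diff[OF u v] a] trace_mul_sym[of "a p"]
      by simp
    then show "trace ((chi (s p) + a p) ** (u - v)) = 0" for p
      using eq[OF s] by (simp add: trace_mult_add_left trace_mult_diff_right)
  qed
  then show ?thesis
    by simp
qed

end

theorem lemma2p2:
  fixes psi chi :: "'a::field^'n^'n \<Rightarrow> 'a^'n^'n"
  assumes char: "(2::'a) \<noteq> 0"
    and card: "infinite (UNIV::'a set) \<or> card (UNIV::'a set) \<ge> CARD('n)^2 + 1"
    and psi_maps: "\<And>y. symmetric_mat y \<Longrightarrow> symmetric_mat (psi y)"
    and chi_maps: "\<And>x. symmetric_mat x \<Longrightarrow> invertible x \<Longrightarrow> symmetric_mat (chi x)"
    and tr: "\<And>x y. symmetric_mat x \<Longrightarrow> invertible x \<Longrightarrow> symmetric_mat y \<Longrightarrow>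
               trace (x ** y) = trace (chi x ** psi y)"
  shows "(\<forall>x y. symmetric_mat x \<longrightarrow> symmetric_mat y \<longrightarrow> psi (x + y) = psi x + psi y) \<and>
         (\<forall>c x. symmetric_mat x \<longrightarrow> psi (mat_scale c x) = mat_scale c (psi x))"
proof -
  interpret trace_compatible_maps psi chi
    using char psi_maps chi_maps tr by unfold_locales
  show ?thesis
  proof (intro conjI allI impI)
    fix x y :: "'a^'n^'n"
    assume x: "symmetric_mat x" and y: "symmetric_mat y"
    show "psi (x + y) = psi x + psi y"
    proof (rule eq_if_trace_chi_eq)
      fix w :: "'a^'n^'n" assume w: "symmetric_mat w" "invertible w"
      show "trace (chi w ** psi (x + y)) = trace (chi w ** (psi x + psi y))"
        using x y by (simp add: tr[OF w, symmetric] symmetric_mat_add trace_mult_add_right)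
    qed (use x y in \<open>simp_all add: psi_maps symmetric_mat_add\<close>)
  next
    fix c and x :: "'a^'n^'n"
    assume x: "symmetric_mat x"
    show "psi (mat_scale c x) = mat_scale c (psi x)"
    proof (rule eq_if_trace_chi_eq)
      fix w :: "'a^'n^'n" assume w: "symmetric_mat w" "invertible w"
      show "trace (chi w ** psi (mat_scale c x)) = trace (chi w ** mat_scale c (psi x))"
        using x by (simp add: tr[OF w, symmetric] symmetric_mat_mat_scale trace_mult_mat_scale)
    qed (use x in \<open>simp_all add: psi_maps symmetric_mat_mat_scale\<close>)
  qed
qed

end
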